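(* Let $S$ be an upper semilattice. Then there exists no upper semilattice homomorphism from any subsemilattice $S_0\subseteq S$ onto $\mathrm{Id}(S)$.
   Context: For an upper semilattice (join-semilattice) $S$, an ideal of $S$ is a (possibly empty) upward directed downset of $S$ (downset: $x\le y\in d\Rightarrow x\in d$), equivalently a possibly empty subset closed under finite joins and downward closed. $\mathrm{Id}(S)$ denotes the set of all ideals of $S$, including $\emptyset$, ordered by inclusion; it is a complete lattice, regarded here as an upper semilattice under its join (the join of two ideals is the ideal generated by their union). A subsemilattice of $S$ is a subset closed under binary joins. *)

theory Defs
  imports Main
begin

text \<open>Ideals of an upper semilattice: possibly empty, upward directed downsets.\<close>
definition sl_ideal :: "'a::semilattice_sup set \<Rightarrow> bool" where
  "sl_ideal d \<longleftrightarrow>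
     (\<forall>x y. x \<le> y \<and> y \<in> d \<longrightarrow> x \<in> d) \<and>
     (\<forall>x\<in>d. \<forall>y\<in>d. \<exists>z\<in>d. x \<le> z \<and> y \<le> z)"

definition Id_sl :: "'a::semilattice_sup set set" where
  "Id_sl = {d. sl_ideal d}"

definition ideal_join :: "'a::semilattice_sup set \<Rightarrow> 'a set \<Rightarrow> 'a set" where
  "ideal_join d e = \<Inter>{i. sl_ideal i \<and> d \<union> e \<subseteq> i}"

definition subsemilattice :: "'a::semilattice_sup set \<Rightarrow> bool" where
  "subsemilattice S0 \<longleftrightarrow> (\<forall>x\<in>S0. \<forall>y\<in>S0. sup x y \<in> S0)"

end

theory Submission
  imports Defs
begin

text \<open>Call an ideal \<open>I\<close> escaping if \<open>I \<inter> S0\<close> is cofinal in \<open>I\<close> and \<open>f s \<subset> I\<close> for every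
  \<open>s \<in> I \<inter> S0\<close>. Escaping ideals are closed under unions of chains, so by Zorn's lemma there is a
  maximal one, \<open>M\<close>. If \<open>M = f x\<close> with \<open>x \<in> S0\<close>, then \<open>x \<notin> M\<close>, and the ideal generated by \<open>M\<close> and \<open>x\<close>
  is the down-closure of \<open>x\<close> and of the joins \<open>c \<squnion> x\<close> with \<open>c \<in> M \<inter> S0\<close>. The homomorphism maps all
  of these generators to \<open>M\<close>, so this ideal is again escaping and strictly larger than \<open>M\<close>.\<close>

lemma subset_ideal_join: "d \<subseteq> ideal_join d e"
  unfolding ideal_join_def by blast

lemma ideal_join_absorb: "sl_ideal I \<Longrightarrow> d \<subseteq> I \<Longrightarrow> ideal_join d I = I"
  unfolding ideal_join_def by blast

lemma sl_ideal_sup: "sl_ideal I \<Longrightarrow> a \<in> I \<Longrightarrow> b \<in> I \<Longrightarrow> sup a b \<in> I"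
  unfolding sl_ideal_def by (meson le_sup_iff)

lemma sl_ideal_Union_chain:
  assumes "chain\<^sub>\<subseteq> C" and "\<forall>I\<in>C. sl_ideal I"
  shows "sl_ideal (\<Union>C)"
  unfolding sl_ideal_def
proof (intro conjI allI impI ballI)
  fix x y assume "x \<le> y \<and> y \<in> \<Union>C"
  then show "x \<in> \<Union>C"
    using assms(2) unfolding sl_ideal_def by blast
next
  fix x y assume "x \<in> \<Union>C" "y \<in> \<Union>C"
  then obtain X Y where "X \<in> C" "Y \<in> C" "x \<in> X" "y \<in> Y"
    by blast
  moreover have "X \<subseteq> Y \<or> Y \<subseteq> X"
    using assms(1) \<open>X \<in> C\<close> \<open>Y \<in> C\<close> unfolding chain_subset_def by blast
  ultimately obtain Z where Z: "Z \<in> C" "x \<in> Z" "y \<in> Z"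
    by blast
  moreover have "sl_ideal Z"
    using assms(2) \<open>Z \<in> C\<close> by blast
  ultimately show "\<exists>z\<in>\<Union>C. x \<le> z \<and> y \<le> z"
    unfolding sl_ideal_def by blast
qed

definition down_closure :: "'a::order set \<Rightarrow> 'a set" where
  "down_closure B = {s. \<exists>b\<in>B. s \<le> b}"

lemma sl_ideal_down_closure:
  assumes "subsemilattice B"
  shows "sl_ideal (down_closure B)"
  unfolding sl_ideal_def down_closure_def
proof (intro conjI allI impI ballI)
  fix x y assume "x \<le> y \<and> y \<in> {s. \<exists>b\<in>B. s \<le> b}"
  then show "x \<in> {s. \<exists>b\<in>B. s \<le> b}"
    using order_trans by blast
next
  fix x y assume "x \<in> {s. \<exists>b\<in>B. s \<le> b}" "y \<in> {s. \<exists>b\<in>B. s \<le> b}"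
  then obtain b c where "b \<in> B" "c \<in> B" "x \<le> b" "y \<le> c" by blast
  moreover have "sup b c \<in> B"
    using assms \<open>b \<in> B\<close> \<open>c \<in> B\<close> unfolding subsemilattice_def by blast
  ultimately show "\<exists>z\<in>{s. \<exists>b\<in>B. s \<le> b}. x \<le> z \<and> y \<le> z"
    by (intro bexI[of _ "sup b c"]) (auto intro: le_supI1 le_supI2)
qed

lemma subsemilattice_Int_ideal:
  "subsemilattice S0 \<Longrightarrow> sl_ideal M \<Longrightarrow> subsemilattice (M \<inter> S0)"
  unfolding subsemilattice_def using sl_ideal_sup by blast

lemma subsemilattice_insert_sup_image:
  assumes "subsemilattice C"
  shows "subsemilattice (insert x ((\<lambda>c. sup c x) ` C))"
proof -
  have "sup (sup c x) (sup c' x) = sup (sup c c') x" for c c'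
    by (simp add: ac_simps)
  moreover have "sup x (sup c x) = sup c x" "sup (sup c x) x = sup c x" for c
    by (simp_all add: ac_simps)
  ultimately show ?thesis
    using assms unfolding subsemilattice_def by (auto intro: rev_image_eqI)
qed

definition escaping_ideal :: "'a::semilattice_sup set \<Rightarrow> ('a \<Rightarrow> 'a set) \<Rightarrow> 'a set \<Rightarrow> bool" where
  "escaping_ideal S0 f I \<longleftrightarrow>
     sl_ideal I \<and> (\<forall>s\<in>I. \<exists>b\<in>I \<inter> S0. s \<le> b) \<and> (\<forall>s\<in>I \<inter> S0. f s \<subset> I)"

lemma escaping_ideal_Union_chain:
  assumes "chain\<^sub>\<subseteq> C" and "\<forall>I\<in>C. escaping_ideal S0 f I"
  shows "escaping_ideal S0 f (\<Union>C)"
proof -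
  have "\<forall>I\<in>C. sl_ideal I"
    using assms(2) unfolding escaping_ideal_def by blast
  with assms(1) have "sl_ideal (\<Union>C)"
    by (rule sl_ideal_Union_chain)
  moreover have "\<exists>b\<in>\<Union>C \<inter> S0. s \<le> b" if s: "s \<in> \<Union>C" for s
  proof -
    obtain X where X: "X \<in> C" "s \<in> X"
      using s by blast
    then have "escaping_ideal S0 f X"
      using assms(2) by blast
    then obtain b where "b \<in> X \<inter> S0" "s \<le> b"
      using X(2) unfolding escaping_ideal_def by blast
    then show ?thesis
      using X(1) by blast
  qed
  moreover have "f s \<subset> \<Union>C" if s: "s \<in> \<Union>C \<inter> S0" for s
  proof -
    obtain X where X: "X \<in> C" "s \<in> X \<inter> S0"
      using s by blast
    then have "escaping_ideal S0 f X"
      using assms(2) by blast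
    then have "f s \<subset> X"
      using X(2) unfolding escaping_ideal_def by blast
    also have "X \<subseteq> \<Union>C"
      using X(1) by blast
    finally show ?thesis .
  qed
  ultimately show ?thesis
    unfolding escaping_ideal_def by blast
qed

lemma ex_maximal_escaping_ideal:
  "\<exists>M. escaping_ideal S0 f M \<and> (\<forall>I. escaping_ideal S0 f I \<and> M \<subseteq> I \<longrightarrow> I = M)"
proof -
  have "\<forall>C\<in>chains {I. escaping_ideal S0 f I}. \<Union>C \<in> {I. escaping_ideal S0 f I}"
    using escaping_ideal_Union_chain unfolding chains_def by blast
  then show ?thesis
    using Zorn_Lemma[of "{I. escaping_ideal S0 f I}"] by blast
qed

locale ideal_join_hom =
  fixes S0 :: "'a::semilattice_sup set" and f :: "'a \<Rightarrow> 'a set"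
  assumes subsemilattice: "subsemilattice S0"
    and hom: "\<And>x y. x \<in> S0 \<Longrightarrow> y \<in> S0 \<Longrightarrow> f (sup x y) = ideal_join (f x) (f y)"
begin

lemma hom_mono:
  assumes "x \<in> S0" "y \<in> S0" "x \<le> y"
  shows "f x \<subseteq> f y"
proof -
  have "f y = ideal_join (f x) (f y)"
    using hom[OF assms(1,2)] assms(3) by (simp add: sup_absorb2)
  then show ?thesis
    by (metis subset_ideal_join)
qed

lemma escaping_ideal_extend:
  assumes M: "escaping_ideal S0 f M" and x: "x \<in> S0" "f x = M"
  shows "\<exists>I. escaping_ideal S0 f I \<and> M \<subset> I"
proof -
  have M_ideal: "sl_ideal M"
    and M_cofinal: "\<forall>s\<in>M. \<exists>b\<in>M \<inter> S0. s \<le> b"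
    and M_escape: "\<forall>s\<in>M \<inter> S0. f s \<subset> M"
    using M unfolding escaping_ideal_def by blast+
  have "x \<notin> M"
    using M_escape x by blast
  define B where "B = insert x ((\<lambda>c. sup c x) ` (M \<inter> S0))"
  define I where "I = down_closure B"
  have B_S0: "B \<subseteq> S0"
    using subsemilattice x unfolding B_def subsemilattice_def by blast
  have f_B: "f b = M" if b: "b \<in> B" for b
  proof (cases "b = x")
    case False
    then obtain c where c: "c \<in> M" "c \<in> S0" "b = sup c x"
      using b unfolding B_def by blast
    then have "f b = ideal_join (f c) M"
      using hom x by simp
    also have "\<dots> = M"
      using ideal_join_absorb M_ideal M_escape c by blast
    finally show ?thesis .
  qed (use x in simp)
  have "B \<subseteq> I"
    unfolding I_def down_closure_def by blast
  have "sl_ideal I"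
    unfolding I_def B_def
    by (intro sl_ideal_down_closure subsemilattice_insert_sup_image
        subsemilattice_Int_ideal subsemilattice M_ideal)
  moreover have "\<forall>s\<in>I. \<exists>b\<in>I \<inter> S0. s \<le> b"
    using \<open>B \<subseteq> I\<close> B_S0 unfolding I_def down_closure_def by blast
  moreover have "M \<subseteq> I"
  proof
    fix a assume "a \<in> M"
    then obtain c where "c \<in> M \<inter> S0" "a \<le> c"
      using M_cofinal by blast
    then show "a \<in> I"
      unfolding I_def down_closure_def B_def by (blast intro: le_supI1)
  qed
  moreover have "x \<in> I"
    using \<open>B \<subseteq> I\<close> unfolding B_def by blast
  moreover have "\<forall>s\<in>I \<inter> S0. f s \<subset> I"
  proof
    fix s assume s: "s \<in> I \<inter> S0"
    then obtain b where "b \<in> B" "s \<le> b"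
      unfolding I_def down_closure_def by blast
    then have "f s \<subseteq> M"
      using hom_mono s B_S0 f_B by blast
    then show "f s \<subset> I"
      using \<open>M \<subseteq> I\<close> \<open>x \<in> I\<close> \<open>x \<notin> M\<close> by blast
  qed
  ultimately show ?thesis
    unfolding escaping_ideal_def using \<open>x \<notin> M\<close> by blast
qed

lemma ex_ideal_not_in_image: "\<exists>M. sl_ideal M \<and> M \<notin> f ` S0"
proof -
  obtain M where M: "escaping_ideal S0 f M"
    and maximal: "\<forall>I. escaping_ideal S0 f I \<and> M \<subseteq> I \<longrightarrow> I = M"
    using ex_maximal_escaping_ideal by blast
  have "M \<notin> f ` S0"
    using escaping_ideal_extend[OF M] maximal by blast
  then show ?thesis
    using M unfolding escaping_ideal_def by blast
qed

end

theorem theorem3p1: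
  fixes S0 :: "'a::semilattice_sup set"
  assumes "subsemilattice S0"
  shows "\<not> (\<exists>f :: 'a \<Rightarrow> 'a set.
              (\<forall>x\<in>S0. \<forall>y\<in>S0. f (sup x y) = ideal_join (f x) (f y)) \<and>
              f ` S0 = Id_sl)"
proof
  assume "\<exists>f :: 'a \<Rightarrow> 'a set.
              (\<forall>x\<in>S0. \<forall>y\<in>S0. f (sup x y) = ideal_join (f x) (f y)) \<and>
              f ` S0 = Id_sl"
  then obtain f :: "'a \<Rightarrow> 'a set"
    where hom: "\<forall>x\<in>S0. \<forall>y\<in>S0. f (sup x y) = ideal_join (f x) (f y)"
      and onto: "f ` S0 = Id_sl"
    by blast
  interpret ideal_join_hom S0 f
    using assms hom by unfold_locales auto
  show False
    using ex_ideal_not_in_image onto unfolding Id_sl_def by blast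
qed

end
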